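(* Let $\Sigma\subseteq\mathcal L$ be closed under subformulas and let $\mathcal W=(W,\le,\ell,R)$ be a $\Sigma$-labelled system whose relation $R$ is $\omega$-sensible. Then the relation $R^+_{\mathcal Q}$ of its quotient $\mathcal Q=(W/{\sim},\le_{\mathcal Q},\ell_{\mathcal Q},R^+_{\mathcal Q})$ is $\omega$-sensible; hence $\mathcal Q$ is a $\Sigma$-quasimodel.
   Context: $\mathcal L$: formulas over propositional variables with $\wedge,\vee,\Rightarrow,\Leftarrow$ (co-implication), $\mathsf X,\mathsf Y,\mathsf G,\mathsf H,\mathsf U,\mathsf S$. Let $\Sigma\subseteq\mathcal L$ be closed under subformulas. A $\Sigma$-type is $\Phi\subseteq\Sigma$ such that: for $\varphi\wedge\psi\in\Sigma$, $\varphi\wedge\psi\in\Phi$ iff $\varphi,\psi\in\Phi$; for $\varphi\vee\psi\in\Sigma$, $\varphi\vee\psi\in\Phi$ iff $\varphi\in\Phi$ or $\psi\in\Phi$; for $\varphi\Rightarrow\psi\in\Sigma$, ($\varphi\Rightarrow\psi\in\Phi$ implies $\varphi\notin\Phi$ or $\psi\in\Phi$) and ($\psi\in\Phi$ implies $\varphi\Rightarrow\psi\in\Phi$); for $\varphi\Leftarrow\psi\in\Sigma$, ($\varphi\Leftarrow\psi\in\Phi$ implies $\varphi\in\Phi$) and ($\varphi\in\Phi,\psi\notin\Phi$ implies $\varphi\Leftarrow\psi\in\Phi$). A poset is locally linear if it is a disjoint union of linear posets; write $a\lessgtr b$ if $a\le b$ or $b\le a$. A $\Sigma$-labelled space is $(W,\le,\ell)$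 with $(W,\le)$ locally linear, $\ell\colon W\to$ $\Sigma$-types, $w\le v\Rightarrow\ell(w)\supseteq\ell(v)$, such that whenever $\varphi\Rightarrow\psi\in\Sigma\setminus\ell(w)$ there is $v\le w$ with $\varphi\in\ell(v)$, $\psi\notin\ell(v)$, and whenever $\varphi\Leftarrow\psi\in\ell(w)$ there is $v\ge w$ with $\varphi\in\ell(v)$, $\psi\notin\ell(v)$. A relation $R\subseteq W\times W$ is convex if every image set and every preimage set of a point is convex in $\le$; fully confluent if (forth–down) $x\le x'Ry'$ implies $xRy\le y'$ for some $y$; (forth–up) $x'\ge xRy$ implies $x'Ry'\ge y$ for some $y'$; (back–down) $x'Ry'\ge y$ implies $x'\ge xRy$ for some $x$; (back–up) $xRy\le y'$ implies $x\le x'Ry'$ for some $x'$; bi-serial if every point has an $R$-successor and an $R$-predecessor. A pair $(\Phi,\Psi)$ of $\Sigma$-types is sensible if for formulas in $\Sigma$: $\mathsf X\varphi\in\Phi\iff\varphi\in\Psi$; $\mathsf Y\varphi\in\Psi\iff\varphi\in\Phi$; $\mathsf G\varphi\in\Phi\iff(\varphi\in\Phi\wedge\mathsf G\varphi\in\Psi)$; $\mathsf H\varphi\in\Psi\iff(\varphi\in\Psi\wedge\mathsf H\varphi\in\Phi)$; $\varphi\,\mathsf U\,\psi\in\Phi\iff(\psi\in\Phi$ or ($\varphi\in\Phi$ and $\varphi\,\mathsf U\,\psi\in\Psi$)); $\varphi\,\mathsf S\,\psi\in\Psi\iff(\psi\in\Psi$ or ($\varphi\in\Psi$ and $\varphi\,\mathsf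 S\,\psi\in\Phi$)). $R$ is sensible if $wRv$ implies $(\ell(w),\ell(v))$ sensible. $R$ is $\omega$-sensible if: $\mathsf G\varphi\in\Sigma\setminus\ell(w)$ implies some $v$ with $wR^nv$ ($n\ge0$) and $\varphi\notin\ell(v)$; $\mathsf H\varphi\in\Sigma\setminus\ell(w)$ implies some $v$ with $vR^nw$ and $\varphi\notin\ell(v)$; $\varphi\,\mathsf U\,\psi\in\ell(w)$ implies some $v$ with $wR^nv$ and $\psi\in\ell(v)$; $\varphi\,\mathsf S\,\psi\in\ell(w)$ implies some $v$ with $vR^nw$ and $\psi\in\ell(v)$. A $\Sigma$-labelled system is a $\Sigma$-labelled space with a bi-serial, fully confluent, convex, sensible relation; a $\Sigma$-quasimodel is a $\Sigma$-labelled system whose relation is $\omega$-sensible. Quotient: $L(w)=\{\ell(v): v\lessgtr w\}$; $w\sim v$ iff $\ell(w)=\ell(v)$ and $L(w)=L(v)$; $[w]\le_{\mathcal Q}[v]$ iff $L(w)=L(v)$ and $\ell(w)\supseteq\ell(v)$; $\ell_{\mathcal Q}([w])=\ell(w)$; $R_{\mathcal Q}$ is the smallest relation with $wRv\Rightarrow[w]R_{\mathcal Q}[v]$; $XR^+_{\mathcal Q}Y$ iff there are $X_1\le_{\mathcal Q}X\le_{\mathcal Q}X_2$, $Y_1\le_{\mathcal Q}Y\le_{\mathcal Q}Y_2$ with $X_2R_{\mathcal Q}Y_1$ and $X_1R_{\mathcal Q}Y_2$. *)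

theory Defs
  imports Main
begin

datatype 'p fm =
    Var 'p
  | And "'p fm" "'p fm"
  | Or "'p fm" "'p fm"
  | Imp "'p fm" "'p fm"
  | Coimp "'p fm" "'p fm"
  | Next "'p fm"
  | Prev "'p fm"
  | Glob "'p fm"
  | Hist "'p fm"
  | Until "'p fm" "'p fm"
  | Since "'p fm" "'p fm"

fun subfms :: "'p fm \<Rightarrow> 'p fm set" where
  "subfms (Var p) = {Var p}"
| "subfms (And a b) = insert (And a b) (subfms a \<union> subfms b)"
| "subfms (Or a b) = insert (Or a b) (subfms a \<union> subfms b)"
| "subfms (Imp a b) = insert (Imp a b) (subfms a \<union> subfms b)"
| "subfms (Coimp a b) = insert (Coimp a b) (subfms a \<union> subfms b)"
| "subfms (Next a) = insert (Next a) (subfms a)"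
| "subfms (Prev a) = insert (Prev a) (subfms a)"
| "subfms (Glob a) = insert (Glob a) (subfms a)"
| "subfms (Hist a) = insert (Hist a) (subfms a)"
| "subfms (Until a b) = insert (Until a b) (subfms a \<union> subfms b)"
| "subfms (Since a b) = insert (Since a b) (subfms a \<union> subfms b)"

definition subfm_closed :: "'p fm set \<Rightarrow> bool" where
  "subfm_closed \<Sigma> \<longleftrightarrow> (\<forall>\<phi>\<in>\<Sigma>. subfms \<phi> \<subseteq> \<Sigma>)"

definition is_type :: "'p fm set \<Rightarrow> 'p fm set \<Rightarrow> bool" where
  "is_type \<Sigma> \<Phi> \<longleftrightarrow> \<Phi> \<subseteq> \<Sigma> \<and>
    (\<forall>a b. And a b \<in> \<Sigma> \<longrightarrow> (And a b \<in> \<Phi> \<longleftrightarrow> a \<in> \<Phi> \<and> b \<in> \<Phi>)) \<and>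
    (\<forall>a b. Or a b \<in> \<Sigma> \<longrightarrow> (Or a b \<in> \<Phi> \<longleftrightarrow> a \<in> \<Phi> \<or> b \<in> \<Phi>)) \<and>
    (\<forall>a b. Imp a b \<in> \<Sigma> \<longrightarrow>
        (Imp a b \<in> \<Phi> \<longrightarrow> a \<notin> \<Phi> \<or> b \<in> \<Phi>) \<and> (b \<in> \<Phi> \<longrightarrow> Imp a b \<in> \<Phi>)) \<and>
    (\<forall>a b. Coimp a b \<in> \<Sigma> \<longrightarrow>
        (Coimp a b \<in> \<Phi> \<longrightarrow> a \<in> \<Phi>) \<and> (a \<in> \<Phi> \<and> b \<notin> \<Phi> \<longrightarrow> Coimp a b \<in> \<Phi>))"

definition partial_order_on_W :: "'w set \<Rightarrow> ('w \<Rightarrow> 'w \<Rightarrow> bool) \<Rightarrow> bool" where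
  "partial_order_on_W W le \<longleftrightarrow>
     (\<forall>a\<in>W. le a a) \<and>
     (\<forall>a\<in>W. \<forall>b\<in>W. le a b \<and> le b a \<longrightarrow> a = b) \<and>
     (\<forall>a\<in>W. \<forall>b\<in>W. \<forall>c\<in>W. le a b \<and> le b c \<longrightarrow> le a c)"

definition locally_linear :: "'w set \<Rightarrow> ('w \<Rightarrow> 'w \<Rightarrow> bool) \<Rightarrow> bool" where
  "locally_linear W le \<longleftrightarrow> partial_order_on_W W le \<and>
     (\<exists>P. (\<forall>B\<in>P. B \<noteq> {}) \<and> \<Union>P = W \<and>
          (\<forall>B\<in>P. \<forall>C\<in>P. B \<noteq> C \<longrightarrow> B \<inter> C = {}) \<and>
          (\<forall>a\<in>W. \<forall>b\<in>W. (le a b \<or> le b a) \<longleftrightarrow> (\<exists>B\<in>P. a \<in> B \<and> b \<in> B)))"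

definition comparable :: "('w \<Rightarrow> 'w \<Rightarrow> bool) \<Rightarrow> 'w \<Rightarrow> 'w \<Rightarrow> bool" where
  "comparable le a b \<longleftrightarrow> le a b \<or> le b a"

definition labelled_space ::
  "'p fm set \<Rightarrow> 'w set \<Rightarrow> ('w \<Rightarrow> 'w \<Rightarrow> bool) \<Rightarrow> ('w \<Rightarrow> 'p fm set) \<Rightarrow> bool" where
  "labelled_space \<Sigma> W le lab \<longleftrightarrow> locally_linear W le \<and>
     (\<forall>w\<in>W. is_type \<Sigma> (lab w)) \<and>
     (\<forall>w\<in>W. \<forall>v\<in>W. le w v \<longrightarrow> lab v \<subseteq> lab w) \<and>
     (\<forall>w\<in>W. \<forall>a b. Imp a b \<in> \<Sigma> - lab w \<longrightarrow>
        (\<exists>v\<in>W. le v w \<and> a \<in> lab v \<and> b \<notin> lab v)) \<and>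
     (\<forall>w\<in>W. \<forall>a b. Coimp a b \<in> lab w \<longrightarrow>
        (\<exists>v\<in>W. le w v \<and> a \<in> lab v \<and> b \<notin> lab v))"

definition convex_set :: "'w set \<Rightarrow> ('w \<Rightarrow> 'w \<Rightarrow> bool) \<Rightarrow> 'w set \<Rightarrow> bool" where
  "convex_set W le C \<longleftrightarrow>
     (\<forall>a\<in>W. \<forall>b\<in>W. \<forall>c\<in>W. a \<in> C \<and> c \<in> C \<and> le a b \<and> le b c \<longrightarrow> b \<in> C)"

definition convex_rel :: "'w set \<Rightarrow> ('w \<Rightarrow> 'w \<Rightarrow> bool) \<Rightarrow> ('w \<Rightarrow> 'w \<Rightarrow> bool) \<Rightarrow> bool" where
  "convex_rel W le R \<longleftrightarrow>
     (\<forall>x\<in>W. convex_set W le {y\<in>W. R x y} \<and> convex_set W le {y\<in>W. R y x})"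

definition fully_confluent ::
  "'w set \<Rightarrow> ('w \<Rightarrow> 'w \<Rightarrow> bool) \<Rightarrow> ('w \<Rightarrow> 'w \<Rightarrow> bool) \<Rightarrow> bool" where
  "fully_confluent W le R \<longleftrightarrow>
     \<comment> \<open>forth-down\<close>
     (\<forall>x\<in>W. \<forall>x'\<in>W. \<forall>y'\<in>W. le x x' \<and> R x' y' \<longrightarrow> (\<exists>y\<in>W. R x y \<and> le y y')) \<and>
     \<comment> \<open>forth-up\<close>
     (\<forall>x\<in>W. \<forall>x'\<in>W. \<forall>y\<in>W. le x x' \<and> R x y \<longrightarrow> (\<exists>y'\<in>W. R x' y' \<and> le y y')) \<and>
     \<comment> \<open>back-down\<close>
     (\<forall>x'\<in>W. \<forall>y'\<in>W. \<forall>y\<in>W. R x' y' \<and> le y y' \<longrightarrow> (\<exists>x\<in>W. le x x' \<and> R x y)) \<and>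
     \<comment> \<open>back-up\<close>
     (\<forall>x\<in>W. \<forall>y\<in>W. \<forall>y'\<in>W. R x y \<and> le y y' \<longrightarrow> (\<exists>x'\<in>W. le x x' \<and> R x' y'))"

definition bi_serial :: "'w set \<Rightarrow> ('w \<Rightarrow> 'w \<Rightarrow> bool) \<Rightarrow> bool" where
  "bi_serial W R \<longleftrightarrow> (\<forall>x\<in>W. (\<exists>y\<in>W. R x y) \<and> (\<exists>y\<in>W. R y x))"

definition sensible_pair :: "'p fm set \<Rightarrow> 'p fm set \<Rightarrow> 'p fm set \<Rightarrow> bool" where
  "sensible_pair \<Sigma> \<Phi> \<Psi> \<longleftrightarrow>
     (\<forall>a. Next a \<in> \<Sigma> \<longrightarrow> (Next a \<in> \<Phi> \<longleftrightarrow> a \<in> \<Psi>)) \<and>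
     (\<forall>a. Prev a \<in> \<Sigma> \<longrightarrow> (Prev a \<in> \<Psi> \<longleftrightarrow> a \<in> \<Phi>)) \<and>
     (\<forall>a. Glob a \<in> \<Sigma> \<longrightarrow> (Glob a \<in> \<Phi> \<longleftrightarrow> a \<in> \<Phi> \<and> Glob a \<in> \<Psi>)) \<and>
     (\<forall>a. Hist a \<in> \<Sigma> \<longrightarrow> (Hist a \<in> \<Psi> \<longleftrightarrow> a \<in> \<Psi> \<and> Hist a \<in> \<Phi>)) \<and>
     (\<forall>a b. Until a b \<in> \<Sigma> \<longrightarrow>
        (Until a b \<in> \<Phi> \<longleftrightarrow> b \<in> \<Phi> \<or> (a \<in> \<Phi> \<and> Until a b \<in> \<Psi>))) \<and>
     (\<forall>a b. Since a b \<in> \<Sigma> \<longrightarrow>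
        (Since a b \<in> \<Psi> \<longleftrightarrow> b \<in> \<Psi> \<or> (a \<in> \<Psi> \<and> Since a b \<in> \<Phi>)))"

definition sensible_rel ::
  "'p fm set \<Rightarrow> 'w set \<Rightarrow> ('w \<Rightarrow> 'p fm set) \<Rightarrow> ('w \<Rightarrow> 'w \<Rightarrow> bool) \<Rightarrow> bool" where
  "sensible_rel \<Sigma> W lab R \<longleftrightarrow> (\<forall>w\<in>W. \<forall>v\<in>W. R w v \<longrightarrow> sensible_pair \<Sigma> (lab w) (lab v))"

definition restr :: "'w set \<Rightarrow> ('w \<Rightarrow> 'w \<Rightarrow> bool) \<Rightarrow> 'w \<Rightarrow> 'w \<Rightarrow> bool" where
  "restr W R = (\<lambda>x y. x \<in> W \<and> y \<in> W \<and> R x y)"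

definition omega_sensible ::
  "'p fm set \<Rightarrow> 'w set \<Rightarrow> ('w \<Rightarrow> 'p fm set) \<Rightarrow> ('w \<Rightarrow> 'w \<Rightarrow> bool) \<Rightarrow> bool" where
  "omega_sensible \<Sigma> W lab R \<longleftrightarrow>
     (\<forall>w\<in>W. \<forall>a. Glob a \<in> \<Sigma> - lab w \<longrightarrow>
        (\<exists>v\<in>W. \<exists>n::nat. (restr W R ^^ n) w v \<and> a \<notin> lab v)) \<and>
     (\<forall>w\<in>W. \<forall>a. Hist a \<in> \<Sigma> - lab w \<longrightarrow>
        (\<exists>v\<in>W. \<exists>n::nat. (restr W R ^^ n) v w \<and> a \<notin> lab v)) \<and>
     (\<forall>w\<in>W. \<forall>a b. Until a b \<in> lab w \<longrightarrow>
        (\<exists>v\<in>W. \<exists>n::nat. (restr W R ^^ n) w v \<and> b \<in> lab v)) \<and>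
     (\<forall>w\<in>W. \<forall>a b. Since a b \<in> lab w \<longrightarrow>
        (\<exists>v\<in>W. \<exists>n::nat. (restr W R ^^ n) v w \<and> b \<in> lab v))"

definition labelled_system ::
  "'p fm set \<Rightarrow> 'w set \<Rightarrow> ('w \<Rightarrow> 'w \<Rightarrow> bool) \<Rightarrow> ('w \<Rightarrow> 'p fm set) \<Rightarrow> ('w \<Rightarrow> 'w \<Rightarrow> bool) \<Rightarrow> bool" where
  "labelled_system \<Sigma> W le lab R \<longleftrightarrow> labelled_space \<Sigma> W le lab \<and>
     (\<forall>x y. R x y \<longrightarrow> x \<in> W \<and> y \<in> W) \<and>
     bi_serial W R \<and> fully_confluent W le R \<and> convex_rel W le R \<and> sensible_rel \<Sigma> W lab R"

definition quasimodel ::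
  "'p fm set \<Rightarrow> 'w set \<Rightarrow> ('w \<Rightarrow> 'w \<Rightarrow> bool) \<Rightarrow> ('w \<Rightarrow> 'p fm set) \<Rightarrow> ('w \<Rightarrow> 'w \<Rightarrow> bool) \<Rightarrow> bool" where
  "quasimodel \<Sigma> W le lab R \<longleftrightarrow> labelled_system \<Sigma> W le lab R \<and> omega_sensible \<Sigma> W lab R"

definition Lset :: "'w set \<Rightarrow> ('w \<Rightarrow> 'w \<Rightarrow> bool) \<Rightarrow> ('w \<Rightarrow> 'p fm set) \<Rightarrow> 'w \<Rightarrow> 'p fm set set" where
  "Lset W le lab w = {lab v |v. v \<in> W \<and> comparable le v w}"

definition qequiv :: "'w set \<Rightarrow> ('w \<Rightarrow> 'w \<Rightarrow> bool) \<Rightarrow> ('w \<Rightarrow> 'p fm set) \<Rightarrow> 'w \<Rightarrow> 'w \<Rightarrow> bool" where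
  "qequiv W le lab w v \<longleftrightarrow> lab w = lab v \<and> Lset W le lab w = Lset W le lab v"

definition qclass :: "'w set \<Rightarrow> ('w \<Rightarrow> 'w \<Rightarrow> bool) \<Rightarrow> ('w \<Rightarrow> 'p fm set) \<Rightarrow> 'w \<Rightarrow> 'w set" where
  "qclass W le lab w = {v \<in> W. qequiv W le lab w v}"

definition qW :: "'w set \<Rightarrow> ('w \<Rightarrow> 'w \<Rightarrow> bool) \<Rightarrow> ('w \<Rightarrow> 'p fm set) \<Rightarrow> 'w set set" where
  "qW W le lab = qclass W le lab ` W"

definition qle :: "'w set \<Rightarrow> ('w \<Rightarrow> 'w \<Rightarrow> bool) \<Rightarrow> ('w \<Rightarrow> 'p fm set) \<Rightarrow> 'w set \<Rightarrow> 'w set \<Rightarrow> bool" where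
  "qle W le lab X Y \<longleftrightarrow> (\<exists>w\<in>W. \<exists>v\<in>W. X = qclass W le lab w \<and> Y = qclass W le lab v \<and>
       Lset W le lab w = Lset W le lab v \<and> lab v \<subseteq> lab w)"

definition qlab :: "('w \<Rightarrow> 'p fm set) \<Rightarrow> 'w set \<Rightarrow> 'p fm set" where
  "qlab lab X = lab (SOME w. w \<in> X)"

definition qR :: "'w set \<Rightarrow> ('w \<Rightarrow> 'w \<Rightarrow> bool) \<Rightarrow> ('w \<Rightarrow> 'p fm set) \<Rightarrow> ('w \<Rightarrow> 'w \<Rightarrow> bool) \<Rightarrow>
    'w set \<Rightarrow> 'w set \<Rightarrow> bool" where
  "qR W le lab R X Y \<longleftrightarrow> (\<exists>w v. R w v \<and> X = qclass W le lab w \<and> Y = qclass W le lab v)"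

definition qRplus :: "'w set \<Rightarrow> ('w \<Rightarrow> 'w \<Rightarrow> bool) \<Rightarrow> ('w \<Rightarrow> 'p fm set) \<Rightarrow> ('w \<Rightarrow> 'w \<Rightarrow> bool) \<Rightarrow>
    'w set \<Rightarrow> 'w set \<Rightarrow> bool" where
  "qRplus W le lab R X Y \<longleftrightarrow> (\<exists>X1 X2 Y1 Y2.
       qle W le lab X1 X \<and> qle W le lab X X2 \<and> qle W le lab Y1 Y \<and> qle W le lab Y Y2 \<and>
       qR W le lab R X2 Y1 \<and> qR W le lab R X1 Y2)"

end

theory Submission
  imports Defs
begin

text \<open>Two points with the same label and the same set of labels in their linear component are
  interchangeable in the quotient. Hence every configuration that a confluence condition of the
  quotient has to resolve can be moved into a single component of W and resolved there by full
  confluence of R. In particular X R+ Y holds in the quotient exactly when Y lies between two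
  R-successors of X there, and exactly when X lies between two R-predecessors of Y. Since labels
  decrease along the order, the forward clauses of sensibility for (X, Y) are squeezed between
  those of the two successors, and the backward clauses between those of the two predecessors.
  Finally, every R-path in W projects onto a path of the quotient, which gives
  \<omega>-sensibility.\<close>

lemma sensible_pair_sandwich:
  assumes "sensible_pair \<Sigma> \<Phi> V" "sensible_pair \<Sigma> \<Phi> V'" "V' \<subseteq> \<Psi>" "\<Psi> \<subseteq> V"
    and "sensible_pair \<Sigma> U \<Psi>" "sensible_pair \<Sigma> U' \<Psi>" "U' \<subseteq> \<Phi>" "\<Phi> \<subseteq> U"
  shows "sensible_pair \<Sigma> \<Phi> \<Psi>"
  using assms(1,2,5,6) assms(3,4,7,8)[unfolded subset_iff] unfolding sensible_pair_def
  by (intro conjI allI impI; metis)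

lemma locally_linear_comparable_trans:
  assumes "locally_linear W le" "a \<in> W" "b \<in> W" "c \<in> W"
    and "comparable le a b" "comparable le b c"
  shows "comparable le a c"
proof -
  obtain P where disjoint: "\<forall>B\<in>P. \<forall>C\<in>P. B \<noteq> C \<longrightarrow> B \<inter> C = {}"
    and "\<forall>a\<in>W. \<forall>b\<in>W. (le a b \<or> le b a) \<longleftrightarrow> (\<exists>B\<in>P. a \<in> B \<and> b \<in> B)"
    using assms(1) unfolding locally_linear_def by (elim conjE exE)
  then have block: "comparable le x y \<longleftrightarrow> (\<exists>B\<in>P. x \<in> B \<and> y \<in> B)" if "x \<in> W" "y \<in> W" for x y
    using that unfolding comparable_def by simp
  obtain B C where "B \<in> P" "C \<in> P" "a \<in> B" "b \<in> B" "b \<in> C" "c \<in> C"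
    using block assms(2-6) by meson
  with disjoint have "B = C" by blast
  with block assms(2,4) \<open>B \<in> P\<close> \<open>a \<in> B\<close> \<open>c \<in> C\<close> show ?thesis by blast
qed

lemma Lset_eq_if_comparable:
  assumes "locally_linear W le" "w \<in> W" "v \<in> W" "comparable le w v"
  shows "Lset W le lab w = Lset W le lab v"
proof -
  have "comparable le u w \<longleftrightarrow> comparable le u v" if "u \<in> W" for u
    using locally_linear_comparable_trans[OF assms(1)] assms that
    unfolding comparable_def by meson
  then show ?thesis unfolding Lset_def by blast
qed

locale quotient_data =
  fixes W :: "'w set" and le :: "'w \<Rightarrow> 'w \<Rightarrow> bool" and lab :: "'w \<Rightarrow> 'p fm set"
begin

abbreviation "cl \<equiv> qclass W le lab"
abbreviation "L \<equiv> Lset W le lab"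
abbreviation "QW \<equiv> qW W le lab"
abbreviation "Qle \<equiv> qle W le lab"

lemma qclass_self: "w \<in> W \<Longrightarrow> w \<in> cl w"
  unfolding qclass_def qequiv_def by simp

lemma qclass_eq_iff:
  assumes "w \<in> W" "v \<in> W"
  shows "cl w = cl v \<longleftrightarrow> lab w = lab v \<and> L w = L v"
  using qclass_self[OF assms(2)] unfolding qclass_def qequiv_def by auto

lemma qlab_qclass:
  assumes "w \<in> W" shows "qlab lab (cl w) = lab w"
proof -
  have "(SOME u. u \<in> cl w) \<in> cl w"
    using qclass_self[OF assms] by (rule someI)
  then show ?thesis unfolding qlab_def qclass_def qequiv_def by simp
qed

lemma qW_I: "w \<in> W \<Longrightarrow> cl w \<in> QW"
  unfolding qW_def by blast

lemma qW_E:
  assumes "X \<in> QW" obtains w where "w \<in> W" "X = cl w"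
  using assms unfolding qW_def by blast

lemma qle_qclass_iff:
  assumes "w \<in> W" "v \<in> W"
  shows "Qle (cl w) (cl v) \<longleftrightarrow> L w = L v \<and> lab v \<subseteq> lab w"
proof
  assume "Qle (cl w) (cl v)"
  then obtain w' v' where "w' \<in> W" "v' \<in> W" "cl w = cl w'" "cl v = cl v'"
      "L w' = L v'" "lab v' \<subseteq> lab w'"
    unfolding qle_def by blast
  with assms show "L w = L v \<and> lab v \<subseteq> lab w"
    by (simp add: qclass_eq_iff)
next
  assume "L w = L v \<and> lab v \<subseteq> lab w"
  with assms show "Qle (cl w) (cl v)" unfolding qle_def by blast
qed

lemma qle_E:
  assumes "Qle X Y"
  obtains w v where "w \<in> W" "v \<in> W" "X = cl w" "Y = cl v" "L w = L v" "lab v \<subseteq> lab w"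
  using assms unfolding qle_def by blast

lemma qle_in_qW: "Qle X Y \<Longrightarrow> X \<in> QW \<and> Y \<in> QW"
  by (metis qle_E qW_I)

lemma qle_refl: "X \<in> QW \<Longrightarrow> Qle X X"
  by (metis qW_E qle_qclass_iff order_refl)

lemma qle_trans:
  assumes "Qle X Y" "Qle Y Z" shows "Qle X Z"
proof -
  obtain x y where "x \<in> W" "y \<in> W" "X = cl x" "Y = cl y" "L x = L y" "lab y \<subseteq> lab x"
    using assms(1) by (rule qle_E)
  moreover obtain y' z where "y' \<in> W" "z \<in> W" "Y = cl y'" "Z = cl z" "L y' = L z" "lab z \<subseteq> lab y'"
    using assms(2) by (rule qle_E)
  ultimately show ?thesis using qclass_eq_iff qle_qclass_iff by auto
qed

lemma qle_antisym:
  assumes "X \<in> QW" "Y \<in> QW" "Qle X Y" "Qle Y X" shows "X = Y"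
  using assms by (metis qW_E qle_qclass_iff qclass_eq_iff subset_antisym)

lemma qle_partial_order: "partial_order_on_W QW Qle"
  unfolding partial_order_on_W_def using qle_refl qle_antisym qle_trans by blast

lemma qlab_antimono: "Qle X Y \<Longrightarrow> qlab lab Y \<subseteq> qlab lab X"
  by (metis qle_E qlab_qclass)

end

locale quotient_system = quotient_data W le lab
  for W :: "'w set" and le and lab :: "'w \<Rightarrow> 'p fm set" +
  fixes \<Sigma> :: "'p fm set" and R :: "'w \<Rightarrow> 'w \<Rightarrow> bool"
  assumes system: "labelled_system \<Sigma> W le lab R"
begin

abbreviation "QR \<equiv> qR W le lab R"
abbreviation "QRp \<equiv> qRplus W le lab R"

lemma space: "labelled_space \<Sigma> W le lab"
  using system unfolding labelled_system_def by blast

lemma linear: "locally_linear W le"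
  using space unfolding labelled_space_def by blast

lemma R_in_W: "R x y \<Longrightarrow> x \<in> W \<and> y \<in> W"
  using system unfolding labelled_system_def by blast

lemma le_refl: "x \<in> W \<Longrightarrow> le x x"
  using linear unfolding locally_linear_def partial_order_on_W_def by blast

lemma lab_antimono: "w \<in> W \<Longrightarrow> v \<in> W \<Longrightarrow> le w v \<Longrightarrow> lab v \<subseteq> lab w"
  using space unfolding labelled_space_def by blast

lemma forth_down: "x \<in> W \<Longrightarrow> x' \<in> W \<Longrightarrow> y' \<in> W \<Longrightarrow> le x x' \<Longrightarrow> R x' y' \<Longrightarrow>
    \<exists>y\<in>W. R x y \<and> le y y'"
  and forth_up: "x \<in> W \<Longrightarrow> x' \<in> W \<Longrightarrow> y \<in> W \<Longrightarrow> le x x' \<Longrightarrow> R x y \<Longrightarrow>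
    \<exists>y'\<in>W. R x' y' \<and> le y y'"
  and back_down: "x' \<in> W \<Longrightarrow> y' \<in> W \<Longrightarrow> y \<in> W \<Longrightarrow> R x' y' \<Longrightarrow> le y y' \<Longrightarrow>
    \<exists>x\<in>W. le x x' \<and> R x y"
  and back_up: "x \<in> W \<Longrightarrow> y \<in> W \<Longrightarrow> y' \<in> W \<Longrightarrow> R x y \<Longrightarrow> le y y' \<Longrightarrow>
    \<exists>x'\<in>W. le x x' \<and> R x' y'"
  using system unfolding labelled_system_def fully_confluent_def by blast+

lemma L_eq_if_le: "w \<in> W \<Longrightarrow> v \<in> W \<Longrightarrow> le w v \<Longrightarrow> L w = L v"
  using Lset_eq_if_comparable[OF linear] unfolding comparable_def by blast

lemma qle_if_le: "w \<in> W \<Longrightarrow> v \<in> W \<Longrightarrow> le w v \<Longrightarrow> Qle (cl w) (cl v)"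
  using qle_qclass_iff L_eq_if_le lab_antimono by blast

lemma qR_I: "R w v \<Longrightarrow> QR (cl w) (cl v)"
  unfolding qR_def by blast

lemma qR_E:
  assumes "QR X Y" obtains w v where "w \<in> W" "v \<in> W" "R w v" "X = cl w" "Y = cl v"
  using assms R_in_W unfolding qR_def by blast

lemma qR_in_qW: "QR X Y \<Longrightarrow> X \<in> QW \<and> Y \<in> QW"
  by (metis qR_E qW_I)

subsection \<open>Moving within a linear component\<close>

lemma L_representative:
  assumes "x \<in> W" "z \<in> W" "L x = L z"
  obtains u where "u \<in> W" "comparable le u x" "lab u = lab z" "L u = L z"
proof -
  have "lab z \<in> L x"
    using assms le_refl unfolding Lset_def comparable_def by blast
  then obtain u where u: "u \<in> W" "comparable le u x" "lab u = lab z"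
    unfolding Lset_def by blast
  have "L u = L z"
    using Lset_eq_if_comparable[OF linear u(1) assms(1) u(2), of lab] assms(3) by simp
  with u show thesis by (rule that)
qed

lemma qclass_above:
  assumes "x \<in> W" "z \<in> W" "L x = L z" "lab z \<subseteq> lab x"
  obtains u where "u \<in> W" "le x u" "cl u = cl z"
proof -
  obtain u where u: "u \<in> W" "comparable le u x" "lab u = lab z" "L u = L z"
    using assms(1-3) by (rule L_representative)
  show thesis
  proof (cases "le x u")
    case True
    with u assms(2) show ?thesis by (intro that[of u]) (simp_all add: qclass_eq_iff)
  next
    case False
    with u have "lab x \<subseteq> lab z" using assms(1) lab_antimono unfolding comparable_def by blast
    with assms have "cl x = cl z" by (simp add: qclass_eq_iff)
    with assms(1) le_refl show ?thesis by (intro that[of x])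
  qed
qed

lemma qclass_below:
  assumes "x \<in> W" "z \<in> W" "L x = L z" "lab x \<subseteq> lab z"
  obtains u where "u \<in> W" "le u x" "cl u = cl z"
proof -
  obtain u where u: "u \<in> W" "comparable le u x" "lab u = lab z" "L u = L z"
    using assms(1-3) by (rule L_representative)
  show thesis
  proof (cases "le u x")
    case True
    with u assms(2) show ?thesis by (intro that[of u]) (simp_all add: qclass_eq_iff)
  next
    case False
    with u have "lab z \<subseteq> lab x" using assms(1) lab_antimono unfolding comparable_def by blast
    with assms have "cl x = cl z" by (simp add: qclass_eq_iff)
    with assms(1) le_refl show ?thesis by (intro that[of x])
  qed
qed

lemma L_eq_imp_lab_linear:
  assumes "x \<in> W" "y \<in> W" "L x = L y"
  shows "lab y \<subseteq> lab x \<or> lab x \<subseteq> lab y"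
proof -
  obtain u where "u \<in> W" "comparable le u x" "lab u = lab y"
    using assms by (rule L_representative)
  with assms(1) show ?thesis
    using lab_antimono unfolding comparable_def by metis
qed

subsection \<open>The quotient is a labelled space\<close>

lemma qle_comparable_iff_L_eq:
  assumes "x \<in> W" "y \<in> W"
  shows "Qle (cl x) (cl y) \<or> Qle (cl y) (cl x) \<longleftrightarrow> L x = L y"
  using L_eq_imp_lab_linear[OF assms] by (auto simp: qle_qclass_iff assms)

lemma qW_locally_linear: "locally_linear QW Qle"
proof -
  define block where "block w = {cl v |v. v \<in> W \<and> L v = L w}" for w
  have block_iff: "cl x \<in> block w \<longleftrightarrow> L x = L w" if "x \<in> W" for x w
    using that unfolding block_def by (auto simp: qclass_eq_iff)
  have disjoint: "\<forall>B\<in>block ` W. \<forall>C\<in>block ` W. B \<noteq> C \<longrightarrow> B \<inter> C = {}"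
  proof (intro ballI impI)
    fix B C assume BC: "B \<in> block ` W" "C \<in> block ` W" "B \<noteq> C"
    show "B \<inter> C = {}"
    proof (rule ccontr)
      assume "B \<inter> C \<noteq> {}"
      then obtain b c x where "b \<in> W" "c \<in> W" "x \<in> W" "B = block b" "C = block c"
          "cl x \<in> B" "cl x \<in> C"
        using BC unfolding block_def by blast
      then have "B = C" using block_iff unfolding block_def by simp
      with \<open>B \<noteq> C\<close> show False ..
    qed
  qed
  have union: "\<Union> (block ` W) = QW"
    unfolding block_def qW_def by blast
  have nonempty: "\<forall>B\<in>block ` W. B \<noteq> {}"
    using block_iff by blast
  have blocks: "\<forall>X\<in>QW. \<forall>Y\<in>QW. (Qle X Y \<or> Qle Y X) \<longleftrightarrow> (\<exists>B\<in>block ` W. X \<in> B \<and> Y \<in> B)"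
  proof (intro ballI)
    fix X Y assume "X \<in> QW" "Y \<in> QW"
    obtain x where "x \<in> W" "X = cl x" using \<open>X \<in> QW\<close> by (rule qW_E)
    moreover obtain y where "y \<in> W" "Y = cl y" using \<open>Y \<in> QW\<close> by (rule qW_E)
    moreover have "(\<exists>B\<in>block ` W. cl x \<in> B \<and> cl y \<in> B) \<longleftrightarrow> L x = L y"
      using block_iff \<open>x \<in> W\<close> \<open>y \<in> W\<close> by auto
    ultimately show "(Qle X Y \<or> Qle Y X) \<longleftrightarrow> (\<exists>B\<in>block ` W. X \<in> B \<and> Y \<in> B)"
      using qle_comparable_iff_L_eq by simp
  qed
  show ?thesis unfolding locally_linear_def
    by (intro conjI exI[of _ "block ` W"] qle_partial_order nonempty union disjoint blocks)
qed

lemma qW_labelled_space: "labelled_space \<Sigma> QW Qle (qlab lab)"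
  unfolding labelled_space_def
proof (intro conjI qW_locally_linear ballI allI impI)
  fix X assume "X \<in> QW"
  then obtain w where "w \<in> W" "X = cl w" by (rule qW_E)
  then show "is_type \<Sigma> (qlab lab X)"
    using space unfolding labelled_space_def by (simp add: qlab_qclass)
next
  fix X Y assume "Qle X Y"
  then show "qlab lab Y \<subseteq> qlab lab X" by (rule qlab_antimono)
next
  fix X a b assume X: "X \<in> QW" and ab: "Imp a b \<in> \<Sigma> - qlab lab X"
  obtain w where w: "w \<in> W" "X = cl w" using X by (rule qW_E)
  with ab have "Imp a b \<in> \<Sigma> - lab w" by (simp add: qlab_qclass)
  with w obtain v where v: "v \<in> W" "le v w" "a \<in> lab v" "b \<notin> lab v"
    using space unfolding labelled_space_def by blast
  with w have "Qle (cl v) X" by (simp add: qle_if_le)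
  with v show "\<exists>Y\<in>QW. Qle Y X \<and> a \<in> qlab lab Y \<and> b \<notin> qlab lab Y"
    using qW_I[OF v(1)] qlab_qclass[OF v(1)] by auto
next
  fix X a b assume X: "X \<in> QW" and ab: "Coimp a b \<in> qlab lab X"
  obtain w where w: "w \<in> W" "X = cl w" using X by (rule qW_E)
  with ab have "Coimp a b \<in> lab w" by (simp add: qlab_qclass)
  with w obtain v where v: "v \<in> W" "le w v" "a \<in> lab v" "b \<notin> lab v"
    using space unfolding labelled_space_def by blast
  with w have "Qle X (cl v)" by (simp add: qle_if_le)
  with v show "\<exists>Y\<in>QW. Qle X Y \<and> a \<in> qlab lab Y \<and> b \<notin> qlab lab Y"
    using qW_I[OF v(1)] qlab_qclass[OF v(1)] by auto
qed

subsection \<open>Confluence of the quotient relation\<close>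

lemma qR_forth_down:
  assumes "Qle X X'" "QR X' Y'" obtains Y where "QR X Y" "Qle Y Y'"
proof -
  obtain x x' where x: "x \<in> W" "x' \<in> W" "X = cl x" "X' = cl x'" "L x = L x'" "lab x' \<subseteq> lab x"
    using assms(1) by (rule qle_E)
  obtain w v where wv: "w \<in> W" "v \<in> W" "R w v" "X' = cl w" "Y' = cl v"
    using assms(2) by (rule qR_E)
  with x have "L w = L x" "lab w \<subseteq> lab x" by (simp_all add: qclass_eq_iff)
  with wv(1) x(1) obtain u where u: "u \<in> W" "le u w" "cl u = X"
    by (rule qclass_below) (simp add: x(3))
  with wv obtain y where y: "y \<in> W" "R u y" "le y v"
    using forth_down by blast
  from y(2) u(3) have "QR X (cl y)" by (metis qR_I)
  moreover have "Qle (cl y) Y'" using qle_if_le y wv by simp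
  ultimately show thesis by (rule that)
qed

lemma qR_forth_up:
  assumes "Qle X X'" "QR X Y" obtains Y' where "QR X' Y'" "Qle Y Y'"
proof -
  obtain x x' where x: "x \<in> W" "x' \<in> W" "X = cl x" "X' = cl x'" "L x = L x'" "lab x' \<subseteq> lab x"
    using assms(1) by (rule qle_E)
  obtain w v where wv: "w \<in> W" "v \<in> W" "R w v" "X = cl w" "Y = cl v"
    using assms(2) by (rule qR_E)
  with x have "L w = L x'" "lab x' \<subseteq> lab w" by (simp_all add: qclass_eq_iff)
  with wv(1) x(2) obtain u where u: "u \<in> W" "le w u" "cl u = X'"
    by (rule qclass_above) (simp add: x(4))
  with wv obtain y where y: "y \<in> W" "R u y" "le v y"
    using forth_up by blast
  from y(2) u(3) have "QR X' (cl y)" by (metis qR_I)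
  moreover have "Qle Y (cl y)" using qle_if_le y wv by simp
  ultimately show thesis by (rule that)
qed

lemma qR_back_down:
  assumes "QR X' Y'" "Qle Y Y'" obtains X where "Qle X X'" "QR X Y"
proof -
  obtain y y' where y: "y \<in> W" "y' \<in> W" "Y = cl y" "Y' = cl y'" "L y = L y'" "lab y' \<subseteq> lab y"
    using assms(2) by (rule qle_E)
  obtain w v where wv: "w \<in> W" "v \<in> W" "R w v" "X' = cl w" "Y' = cl v"
    using assms(1) by (rule qR_E)
  with y have "L v = L y" "lab v \<subseteq> lab y" by (simp_all add: qclass_eq_iff)
  with wv(2) y(1) obtain u where u: "u \<in> W" "le u v" "cl u = Y"
    by (rule qclass_below) (simp add: y(3))
  with wv obtain x where x: "x \<in> W" "le x w" "R x u"
    using back_down by blast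
  have "Qle (cl x) X'" using qle_if_le x wv by simp
  moreover from x(3) u(3) have "QR (cl x) Y" by (metis qR_I)
  ultimately show thesis by (rule that)
qed

lemma qR_back_up:
  assumes "QR X Y" "Qle Y Y'" obtains X' where "Qle X X'" "QR X' Y'"
proof -
  obtain y y' where y: "y \<in> W" "y' \<in> W" "Y = cl y" "Y' = cl y'" "L y = L y'" "lab y' \<subseteq> lab y"
    using assms(2) by (rule qle_E)
  obtain w v where wv: "w \<in> W" "v \<in> W" "R w v" "X = cl w" "Y = cl v"
    using assms(1) by (rule qR_E)
  with y have "L v = L y'" "lab y' \<subseteq> lab v" by (simp_all add: qclass_eq_iff)
  with wv(2) y(2) obtain u where u: "u \<in> W" "le v u" "cl u = Y'"
    by (rule qclass_above) (simp add: y(4))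
  with wv obtain x where x: "x \<in> W" "le w x" "R x u"
    using back_up by blast
  have "Qle X (cl x)" using qle_if_le x wv by simp
  moreover from x(3) u(3) have "QR (cl x) Y'" by (metis qR_I)
  ultimately show thesis by (rule that)
qed

lemma qRplus_iff_forth:
  "QRp X Y \<longleftrightarrow> (\<exists>V V'. QR X V \<and> Qle V Y \<and> QR X V' \<and> Qle Y V')"
proof
  assume "QRp X Y"
  then obtain X1 X2 Y1 Y2 where
    "Qle X1 X" "Qle X X2" "Qle Y1 Y" "Qle Y Y2" "QR X2 Y1" "QR X1 Y2"
    unfolding qRplus_def by blast
  moreover from this obtain V where "QR X V" "Qle V Y1" by (blast elim: qR_forth_down)
  moreover from calculation obtain V' where "QR X V'" "Qle Y2 V'" by (blast elim: qR_forth_up)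
  ultimately show "\<exists>V V'. QR X V \<and> Qle V Y \<and> QR X V' \<and> Qle Y V'"
    by (blast intro: qle_trans)
next
  assume "\<exists>V V'. QR X V \<and> Qle V Y \<and> QR X V' \<and> Qle Y V'"
  with qR_in_qW qle_refl show "QRp X Y"
    unfolding qRplus_def by blast
qed

lemma qRplus_iff_back:
  "QRp X Y \<longleftrightarrow> (\<exists>U U'. QR U Y \<and> Qle U X \<and> QR U' Y \<and> Qle X U')"
proof
  assume "QRp X Y"
  then obtain X1 X2 Y1 Y2 where
    "Qle X1 X" "Qle X X2" "Qle Y1 Y" "Qle Y Y2" "QR X2 Y1" "QR X1 Y2"
    unfolding qRplus_def by blast
  moreover from this obtain U where "Qle U X1" "QR U Y" by (blast elim: qR_back_down)
  moreover from calculation obtain U' where "Qle X2 U'" "QR U' Y" by (blast elim: qR_back_up)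
  ultimately show "\<exists>U U'. QR U Y \<and> Qle U X \<and> QR U' Y \<and> Qle X U'"
    by (blast intro: qle_trans)
next
  assume "\<exists>U U'. QR U Y \<and> Qle U X \<and> QR U' Y \<and> Qle X U'"
  with qR_in_qW qle_refl show "QRp X Y"
    unfolding qRplus_def by blast
qed

lemma qR_imp_qRplus: "QR X Y \<Longrightarrow> QRp X Y"
  using qRplus_iff_forth qR_in_qW qle_refl by blast

lemma qRplus_in_qW: "QRp X Y \<Longrightarrow> X \<in> QW \<and> Y \<in> QW"
  using qRplus_iff_forth qR_in_qW qle_in_qW by blast

subsection \<open>The quotient is a labelled system\<close>

lemma qRplus_bi_serial: "bi_serial QW QRp"
  unfolding bi_serial_def
proof (intro ballI conjI)
  fix X assume "X \<in> QW"
  then obtain w where w: "w \<in> W" "X = cl w" by (rule qW_E)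
  moreover have "bi_serial W R"
    using system unfolding labelled_system_def by blast
  ultimately obtain v u where "v \<in> W" "R w v" "u \<in> W" "R u w"
    unfolding bi_serial_def by blast
  with w show "\<exists>Y\<in>QW. QRp X Y" "\<exists>Y\<in>QW. QRp Y X"
    using qR_I qR_imp_qRplus qW_I by blast+
qed

lemma qRplus_fully_confluent: "fully_confluent QW Qle QRp"
  unfolding fully_confluent_def
proof (intro conjI ballI impI; elim conjE)
  fix X X' Y' assume "Qle X X'" "QRp X' Y'"
  then obtain V where "QR X' V" "Qle V Y'" using qRplus_iff_forth by blast
  moreover obtain Y where "QR X Y" "Qle Y V"
    using \<open>Qle X X'\<close> \<open>QR X' V\<close> by (rule qR_forth_down)
  ultimately show "\<exists>Y\<in>QW. QRp X Y \<and> Qle Y Y'"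
    using qR_imp_qRplus qR_in_qW qle_trans by blast
next
  fix X X' Y assume "Qle X X'" "QRp X Y"
  then obtain V where "QR X V" "Qle Y V" using qRplus_iff_forth by blast
  moreover obtain Y' where "QR X' Y'" "Qle V Y'"
    using \<open>Qle X X'\<close> \<open>QR X V\<close> by (rule qR_forth_up)
  ultimately show "\<exists>Y'\<in>QW. QRp X' Y' \<and> Qle Y Y'"
    using qR_imp_qRplus qR_in_qW qle_trans by blast
next
  fix X' Y' Y assume "QRp X' Y'" "Qle Y Y'"
  then obtain U where "QR U Y'" "Qle U X'" using qRplus_iff_back by blast
  moreover obtain X where "Qle X U" "QR X Y"
    using \<open>QR U Y'\<close> \<open>Qle Y Y'\<close> by (rule qR_back_down)
  ultimately show "\<exists>X\<in>QW. Qle X X' \<and> QRp X Y"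
    using qR_imp_qRplus qR_in_qW qle_trans by blast
next
  fix X Y Y' assume "QRp X Y" "Qle Y Y'"
  then obtain U where "QR U Y" "Qle X U" using qRplus_iff_back by blast
  moreover obtain X' where "Qle U X'" "QR X' Y'"
    using \<open>QR U Y\<close> \<open>Qle Y Y'\<close> by (rule qR_back_up)
  ultimately show "\<exists>X'\<in>QW. Qle X X' \<and> QRp X' Y'"
    using qR_imp_qRplus qR_in_qW qle_trans by blast
qed

lemma qRplus_convex: "convex_rel QW Qle QRp"
  unfolding convex_rel_def convex_set_def
proof (intro ballI conjI impI; elim conjE; simp)
  fix X A B C assume "QRp X A" "QRp X C" "Qle A B" "Qle B C"
  then obtain V V' where "QR X V" "Qle V A" "QR X V'" "Qle C V'"
    using qRplus_iff_forth by meson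
  with \<open>Qle A B\<close> \<open>Qle B C\<close> show "QRp X B"
    unfolding qRplus_iff_forth by (blast intro: qle_trans)
next
  fix X A B C assume "QRp A X" "QRp C X" "Qle A B" "Qle B C"
  then obtain U U' where "QR U X" "Qle U A" "QR U' X" "Qle C U'"
    using qRplus_iff_back by meson
  with \<open>Qle A B\<close> \<open>Qle B C\<close> show "QRp B X"
    unfolding qRplus_iff_back by (blast intro: qle_trans)
qed

lemma qR_sensible:
  assumes "QR X Y" shows "sensible_pair \<Sigma> (qlab lab X) (qlab lab Y)"
proof -
  obtain w v where "w \<in> W" "v \<in> W" "R w v" "X = cl w" "Y = cl v"
    using assms by (rule qR_E)
  with system show ?thesis
    unfolding labelled_system_def sensible_rel_def by (simp add: qlab_qclass)
qed

lemma qRplus_sensible: "sensible_rel \<Sigma> QW (qlab lab) QRp"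
  unfolding sensible_rel_def
proof (intro ballI impI)
  fix X Y assume "QRp X Y"
  then obtain V V' U U' where succ: "QR X V" "Qle V Y" "QR X V'" "Qle Y V'"
    and pred: "QR U Y" "Qle U X" "QR U' Y" "Qle X U'"
    using qRplus_iff_forth qRplus_iff_back by meson
  show "sensible_pair \<Sigma> (qlab lab X) (qlab lab Y)"
    by (rule sensible_pair_sandwich[of _ _ "qlab lab V" "qlab lab V'" _ "qlab lab U" "qlab lab U'"])
      (simp_all add: succ pred qR_sensible qlab_antimono)
qed

lemma quotient_labelled_system: "labelled_system \<Sigma> QW Qle (qlab lab) QRp"
  unfolding labelled_system_def
  using qW_labelled_space qRplus_in_qW qRplus_bi_serial qRplus_fully_confluent qRplus_convex
    qRplus_sensible by blast

subsection \<open>\<open>\<omega>\<close>-sensibility\<close>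

lemma relpow_qclass: "(restr W R ^^ n) w v \<Longrightarrow> w \<in> W \<Longrightarrow> (restr QW QRp ^^ n) (cl w) (cl v)"
proof (induction n arbitrary: v)
  case (Suc n)
  then obtain u where "(restr W R ^^ n) w u" "restr W R u v" by auto
  with Suc.IH Suc.prems(2) show ?case
    unfolding restr_def using qR_I qR_imp_qRplus qW_I by fastforce
qed simp

lemma future_witness_qclass:
  assumes "w \<in> W" "\<exists>v\<in>W. \<exists>n. (restr W R ^^ n) w v \<and> P (lab v)"
  shows "\<exists>V\<in>QW. \<exists>n. (restr QW QRp ^^ n) (cl w) V \<and> P (qlab lab V)"
proof -
  from assms(2) obtain v n where v: "v \<in> W" "(restr W R ^^ n) w v" "P (lab v)" by blast
  with assms(1) have "(restr QW QRp ^^ n) (cl w) (cl v)" "P (qlab lab (cl v))"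
    by (simp_all add: relpow_qclass qlab_qclass)
  with qW_I[OF v(1)] show ?thesis by blast
qed

lemma past_witness_qclass:
  assumes "w \<in> W" "\<exists>v\<in>W. \<exists>n. (restr W R ^^ n) v w \<and> P (lab v)"
  shows "\<exists>V\<in>QW. \<exists>n. (restr QW QRp ^^ n) V (cl w) \<and> P (qlab lab V)"
proof -
  from assms(2) obtain v n where v: "v \<in> W" "(restr W R ^^ n) v w" "P (lab v)" by blast
  then have "(restr QW QRp ^^ n) (cl v) (cl w)" "P (qlab lab (cl v))"
    by (simp_all add: relpow_qclass qlab_qclass)
  with qW_I[OF v(1)] show ?thesis by blast
qed

lemma quotient_omega_sensible:
  assumes "omega_sensible \<Sigma> W lab R"
  shows "omega_sensible \<Sigma> QW (qlab lab) QRp"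
  unfolding omega_sensible_def
proof (intro conjI ballI allI impI)
  fix X a assume X: "X \<in> QW" and "Glob a \<in> \<Sigma> - qlab lab X"
  obtain w where w: "w \<in> W" "X = cl w" using X by (rule qW_E)
  with \<open>Glob a \<in> \<Sigma> - qlab lab X\<close> have "Glob a \<in> \<Sigma> - lab w" by (simp add: qlab_qclass)
  with w(1) assms have "\<exists>v\<in>W. \<exists>n. (restr W R ^^ n) w v \<and> a \<notin> lab v"
    unfolding omega_sensible_def by blast
  from future_witness_qclass[where P = "\<lambda>\<Phi>. a \<notin> \<Phi>", OF w(1) this]
  show "\<exists>V\<in>QW. \<exists>n. (restr QW QRp ^^ n) X V \<and> a \<notin> qlab lab V" by (simp add: w(2))
next
  fix X a assume X: "X \<in> QW" and "Hist a \<in> \<Sigma> - qlab lab X"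
  obtain w where w: "w \<in> W" "X = cl w" using X by (rule qW_E)
  with \<open>Hist a \<in> \<Sigma> - qlab lab X\<close> have "Hist a \<in> \<Sigma> - lab w" by (simp add: qlab_qclass)
  with w(1) assms have "\<exists>v\<in>W. \<exists>n. (restr W R ^^ n) v w \<and> a \<notin> lab v"
    unfolding omega_sensible_def by blast
  from past_witness_qclass[where P = "\<lambda>\<Phi>. a \<notin> \<Phi>", OF w(1) this]
  show "\<exists>V\<in>QW. \<exists>n. (restr QW QRp ^^ n) V X \<and> a \<notin> qlab lab V" by (simp add: w(2))
next
  fix X a b assume X: "X \<in> QW" and "Until a b \<in> qlab lab X"
  obtain w where w: "w \<in> W" "X = cl w" using X by (rule qW_E)
  with \<open>Until a b \<in> qlab lab X\<close> have "Until a b \<in> lab w" by (simp add: qlab_qclass)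
  with w(1) assms have "\<exists>v\<in>W. \<exists>n. (restr W R ^^ n) w v \<and> b \<in> lab v"
    unfolding omega_sensible_def by blast
  from future_witness_qclass[where P = "\<lambda>\<Phi>. b \<in> \<Phi>", OF w(1) this]
  show "\<exists>V\<in>QW. \<exists>n. (restr QW QRp ^^ n) X V \<and> b \<in> qlab lab V" by (simp add: w(2))
next
  fix X a b assume X: "X \<in> QW" and "Since a b \<in> qlab lab X"
  obtain w where w: "w \<in> W" "X = cl w" using X by (rule qW_E)
  with \<open>Since a b \<in> qlab lab X\<close> have "Since a b \<in> lab w" by (simp add: qlab_qclass)
  with w(1) assms have "\<exists>v\<in>W. \<exists>n. (restr W R ^^ n) v w \<and> b \<in> lab v"
    unfolding omega_sensible_def by blast
  from past_witness_qclass[where P = "\<lambda>\<Phi>. b \<in> \<Phi>", OF w(1) this]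
  show "\<exists>V\<in>QW. \<exists>n. (restr QW QRp ^^ n) V X \<and> b \<in> qlab lab V" by (simp add: w(2))
qed

end

theorem lemma6p3:
  fixes \<Sigma> :: "'p fm set" and W :: "'w set" and le R :: "'w \<Rightarrow> 'w \<Rightarrow> bool"
    and lab :: "'w \<Rightarrow> 'p fm set"
  assumes "subfm_closed \<Sigma>"
    and "labelled_system \<Sigma> W le lab R"
    and "omega_sensible \<Sigma> W lab R"
  shows "omega_sensible \<Sigma> (qW W le lab) (qlab lab) (qRplus W le lab R)
       \<and> quasimodel \<Sigma> (qW W le lab) (qle W le lab) (qlab lab) (qRplus W le lab R)"
proof -
  interpret quotient_system W le lab \<Sigma> R
    using assms(2) by unfold_locales
  have "omega_sensible \<Sigma> QW (qlab lab) QRp"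
    using assms(3) by (rule quotient_omega_sensible)
  with quotient_labelled_system show ?thesis
    unfolding quasimodel_def by blast
qed

end
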